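(* Let $X$ be a Banach lattice, $S$ a convex $C_0$-semigroup on $X$, $T>0$ and $x_0\in X$. Then there exist $L\ge0$ and $r>0$ such that $\sup_{t\in[0,T]}\|S(t)y-S(t)z\|\le L\|y-z\|$ for all $y,z\in X$ with $\|y-x_0\|\le r$ and $\|z-x_0\|\le r$.
   Context: An operator $T\colon X\to X$ is convex if $T(\lambda x+(1-\lambda)y)\le\lambda Tx+(1-\lambda)Ty$ for all $x,y\in X$, $\lambda\in[0,1]$, and bounded if $\sup_{\|x\|\le r}\|Tx\|<\infty$ for all $r>0$. A convex $C_0$-semigroup is a family $(S(t))_{t\ge0}$ of bounded convex operators $X\to X$ with $S(0)=\mathrm{id}$, $S(t+s)=S(t)S(s)$ for all $s,t\ge0$, and $S(t)x\to x$ as $t\downarrow0$ for all $x$. *)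

theory Defs
  imports "HOL-Analysis.Analysis"
begin

class banach_lattice = banach + lattice +
  assumes add_left_mono_bl: "x \<le> y \<Longrightarrow> x + z \<le> y + z"
  and scaleR_mono_bl: "x \<le> y \<Longrightarrow> 0 \<le> c \<Longrightarrow> c *\<^sub>R x \<le> c *\<^sub>R y"
  and lattice_norm: "sup x (- x) \<le> sup y (- y) \<Longrightarrow> norm x \<le> norm y"

definition convex_op :: "('a::banach_lattice \<Rightarrow> 'a) \<Rightarrow> bool" where
  "convex_op T \<longleftrightarrow> (\<forall>x y. \<forall>a::real. 0 \<le> a \<and> a \<le> 1 \<longrightarrow>
      T (a *\<^sub>R x + (1 - a) *\<^sub>R y) \<le> a *\<^sub>R T x + (1 - a) *\<^sub>R T y)"

definition bounded_op :: "('a::real_normed_vector \<Rightarrow> 'b::real_normed_vector) \<Rightarrow> bool" where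
  "bounded_op T \<longleftrightarrow> (\<forall>r>0. \<exists>M. \<forall>x. norm x \<le> r \<longrightarrow> norm (T x) \<le> M)"

text \<open>A convex C0-semigroup; S t is only relevant for t \<ge> 0.\<close>
definition convex_C0_semigroup :: "(real \<Rightarrow> 'a::banach_lattice \<Rightarrow> 'a) \<Rightarrow> bool" where
  "convex_C0_semigroup S \<longleftrightarrow>
     (\<forall>t\<ge>0. convex_op (S t) \<and> bounded_op (S t)) \<and>
     S 0 = id \<and>
     (\<forall>s\<ge>0. \<forall>t\<ge>0. S (t + s) = S t \<circ> S s) \<and>
     (\<forall>x. ((\<lambda>t. S t x) \<longlongrightarrow> x) (at_right 0))"

end

theory Submission
  imports Defs "HOL-Library.Lattice_Algebras"
begin

(* By the Baire category theorem, applied to the closed sets of points whose orbits stay in the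
   ball of radius n up to time T, the operators S t with t in [0, T] are uniformly bounded on some
   ball; the sets are closed because a bounded convex operator is continuous, and they cover the
   space because every orbit is bounded on compact time intervals. Convexity moves the bound to a
   ball around x0, and a convex operator bounded on a ball is Lipschitz on a smaller concentric
   ball. Throughout, convexity yields two-sided order bounds, which the lattice norm turns into
   norm bounds. *)

(* Proved inside the class, where the global real_vector lemmas are not available, so that they
   can discharge the subclass obligations below. *)
context banach_lattice
begin

lemma scaleR_zero_right_bl: "c *\<^sub>R 0 = 0"
  using scaleR_add_right[of c 0 0] by simp

lemma scaleR_right_mono_bl:
  assumes "a \<le> b" "0 \<le> x"
  shows "a *\<^sub>R x \<le> b *\<^sub>R x"
proof -
  have "0 + a *\<^sub>R x \<le> (b - a) *\<^sub>R x + a *\<^sub>R x"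
    using scaleR_mono_bl[OF assms(2), of "b - a"] assms(1)
    by (intro add_left_mono_bl) (simp add: scaleR_zero_right_bl)
  then show ?thesis
    by (simp flip: scaleR_add_left)
qed

end

subclass (in banach_lattice) ordered_real_vector
proof
  fix x y z :: 'a
  show "x \<le> y \<Longrightarrow> z + x \<le> z + y"
    using add_left_mono_bl[of x y z] by (simp add: add.commute)
qed (fact scaleR_mono_bl scaleR_right_mono_bl)+

subclass (in banach_lattice) lattice_ab_group_add ..

lemma sup_neg_nonneg: "0 \<le> sup x (- x :: 'a::lattice_ab_group_add)"
proof -
  have "x + - x \<le> sup x (- x) + sup x (- x)"
    by (intro add_mono) simp_all
  then show ?thesis
    by simp
qed

lemma norm_sup_neg [simp]: "norm (sup x (- x)) = norm (x :: 'a::banach_lattice)"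
proof (rule antisym)
  have "- sup x (- x) \<le> sup x (- x)"
    using neg_le_0_iff_le[THEN iffD2, OF sup_neg_nonneg] sup_neg_nonneg by (rule order_trans)
  then show "norm (sup x (- x)) \<le> norm x"
    by (intro lattice_norm) simp
qed (intro lattice_norm, simp)

lemma norm_le_norm_add_norm_if_between:
  fixes u v w :: "'a::banach_lattice"
  assumes "u \<le> v" "v \<le> w"
  shows "norm v \<le> norm u + norm w"
proof -
  define p where "p = sup u (- u) + sup w (- w)"
  have "0 \<le> p"
    by (simp add: p_def sup_neg_nonneg add_nonneg_nonneg)
  have "v \<le> p"
    using assms(2) add_mono[OF sup_neg_nonneg[of u], of w "sup w (- w)"]
    by (simp add: p_def order_trans)
  moreover have "- v \<le> p"
    using le_imp_neg_le[OF assms(1)] add_mono[of "- u" "sup u (- u)", OF _ sup_neg_nonneg[of w]]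
    unfolding p_def by (metis add.right_neutral order_trans sup_ge2)
  moreover have "- p \<le> p"
    using \<open>0 \<le> p\<close> by (metis neg_le_0_iff_le order_trans)
  ultimately have "norm v \<le> norm p"
    by (intro lattice_norm) (simp add: le_supI1)
  also have "\<dots> \<le> norm u + norm w"
    using norm_triangle_ineq[of "sup u (- u)" "sup w (- w)"] by (simp add: p_def)
  finally show ?thesis .
qed

lemma convex_opD:
  "convex_op F \<Longrightarrow> 0 \<le> a \<Longrightarrow> a \<le> 1 \<Longrightarrow>
    F (a *\<^sub>R x + (1 - a) *\<^sub>R y) \<le> a *\<^sub>R F x + (1 - a) *\<^sub>R F y"
  unfolding convex_op_def by blast

lemma convex_op_midpoint:
  "convex_op F \<Longrightarrow> F (midpoint x y) \<le> midpoint (F x) (F y)"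
  using convex_opD[of F "1/2" x y] by (simp add: midpoint_def scaleR_add_right)

lemma convex_op_diff_le_scaleR:
  fixes F :: "'a::banach_lattice \<Rightarrow> 'a"
  assumes "convex_op F" "0 \<le> a" "a \<le> 1"
  shows "F (y + a *\<^sub>R h) - F y \<le> a *\<^sub>R (F (y + h) - F y)"
proof -
  have "F (y + a *\<^sub>R h) = F (a *\<^sub>R (y + h) + (1 - a) *\<^sub>R y)"
    by (simp add: algebra_simps)
  also have "\<dots> \<le> a *\<^sub>R F (y + h) + (1 - a) *\<^sub>R F y"
    using assms by (rule convex_opD)
  finally have "F (y + a *\<^sub>R h) - F y \<le> a *\<^sub>R F (y + h) + (1 - a) *\<^sub>R F y - F y"
    by (rule diff_right_mono)
  then show ?thesis
    by (simp add: algebra_simps)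
qed

lemma convex_op_dist_le_if_close:
  fixes F :: "'a::banach_lattice \<Rightarrow> 'a"
  assumes "convex_op F" "0 < \<delta>"
    and bound: "\<And>x. x \<in> cball x0 (r + \<delta>) \<Longrightarrow> norm (F x) \<le> M"
    and y: "y \<in> cball x0 r" and z: "z \<in> cball x0 r" and "dist y z \<le> \<delta>"
  shows "dist (F y) (F z) \<le> 4 * M / \<delta> * dist y z"
proof -
  \<comment> \<open>h is z - y stretched to length \<delta>; for y = z, division by zero makes h = 0.\<close>
  define a where "a = dist y z / \<delta>"
  define h where "h = (\<delta> / dist y z) *\<^sub>R (z - y)"
  have a: "0 \<le> a" "a \<le> 1"
    using assms(2,6) by (auto simp: a_def)
  have step: "a *\<^sub>R h = z - y"
    using assms(2) by (cases "y = z") (simp_all add: a_def h_def)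
  have "norm h \<le> \<delta>"
    using assms(2) by (cases "y = z") (simp_all add: h_def dist_norm norm_minus_commute)
  then have "y + h \<in> cball x0 (r + \<delta>)" "z - h \<in> cball x0 (r + \<delta>)"
    using y z dist_triangle[of x0 "y + h" y] dist_triangle[of x0 "z - h" z]
    by (simp_all add: dist_norm)
  moreover have "y \<in> cball x0 (r + \<delta>)" "z \<in> cball x0 (r + \<delta>)"
    using y z assms(2) by auto
  ultimately have "norm (F (y + h) - F y) \<le> 2 * M" "norm (F (z - h) - F z) \<le> 2 * M"
    using bound norm_triangle_ineq4 by (smt (verit))+
  have upper: "F z - F y \<le> a *\<^sub>R (F (y + h) - F y)"
    using convex_op_diff_le_scaleR[OF assms(1) a, of y h] step by simp
  have "F y - F z \<le> a *\<^sub>R (F (z - h) - F z)"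
    using convex_op_diff_le_scaleR[OF assms(1) a, of z "- h"] step by simp
  then have lower: "- (a *\<^sub>R (F (z - h) - F z)) \<le> F z - F y"
    by (simp add: neg_le_iff_le[symmetric, of "F y - F z"])
  have "dist (F y) (F z) \<le> a * norm (F (z - h) - F z) + a * norm (F (y + h) - F y)"
    using norm_le_norm_add_norm_if_between[OF lower upper] a
    by (simp add: dist_norm norm_minus_commute)
  also have "\<dots> \<le> a * (2 * M) + a * (2 * M)"
    using \<open>norm (F (y + h) - F y) \<le> 2 * M\<close> \<open>norm (F (z - h) - F z) \<le> 2 * M\<close> a
    by (intro add_mono mult_left_mono) auto
  also have "\<dots> = 4 * M / \<delta> * dist y z"
    by (simp add: a_def)
  finally show ?thesis .
qed

lemma convex_op_lipschitz_on_cball: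
  fixes F :: "'a::banach_lattice \<Rightarrow> 'a"
  assumes "convex_op F" "0 \<le> r" "r < R"
    and bound: "\<And>x. x \<in> cball x0 R \<Longrightarrow> norm (F x) \<le> M"
  shows "(4 * M / (R - r))-lipschitz_on (cball x0 r) F"
proof (rule lipschitz_onI)
  have "0 \<le> M"
    using bound[of x0] assms(2,3) by (auto intro: order_trans[OF norm_ge_zero])
  then show "0 \<le> 4 * M / (R - r)"
    using assms(3) by simp
  fix y z
  assume y: "y \<in> cball x0 r" and z: "z \<in> cball x0 r"
  show "dist (F y) (F z) \<le> 4 * M / (R - r) * dist y z"
  proof (cases "dist y z \<le> R - r")
    case True
    then show ?thesis
      using convex_op_dist_le_if_close[OF assms(1), of "R - r" x0 r M] assms(3) bound y z by simp
  next
    case False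
    have "dist (F y) (F z) \<le> 2 * M"
      using norm_triangle_ineq4[of "F y" "F z"] bound[of y] bound[of z] y z assms(3)
      by (simp add: dist_norm)
    also have "\<dots> \<le> 4 * M / (R - r) * (R - r)"
      using \<open>0 \<le> M\<close> assms(3) by simp
    also have "\<dots> \<le> 4 * M / (R - r) * dist y z"
      using False \<open>0 \<le> M\<close> assms(3) by (intro mult_left_mono) auto
    finally show ?thesis .
  qed
qed

lemma convex_op_bounded_imp_continuous:
  fixes F :: "'a::banach_lattice \<Rightarrow> 'a"
  assumes "convex_op F" "bounded_op F"
  shows "continuous_on UNIV F"
proof -
  have "isCont F x" for x
  proof -
    obtain M where M: "\<And>y. norm y \<le> norm x + 2 \<Longrightarrow> norm (F y) \<le> M"
      using assms(2) unfolding bounded_op_def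
      by (metis add_nonneg_pos norm_ge_zero zero_less_numeral)
    have "norm (F y) \<le> M" if "y \<in> cball x 2" for y
      using that norm_triangle_ineq2[of y x] by (intro M) (simp add: dist_norm norm_minus_commute)
    then have "(4 * M / (2 - 1))-lipschitz_on (cball x 1) F"
      by (intro convex_op_lipschitz_on_cball[OF assms(1)]) auto
    then have "continuous_on (cball x 1) F"
      by (rule lipschitz_on_continuous_on)
    then show "isCont F x"
      by (rule continuous_on_interior) (use interior_mono[OF ball_subset_cball, of x 1] in auto)
  qed
  then show ?thesis
    by (simp add: continuous_at_imp_continuous_on)
qed

text \<open>A bound on a ball around x1 moves to a ball around x0: a point y near x0 is the
  midpoint of the reflection 2 x0 - x1 and a point of the ball, which bounds F y from above,
  while x0 is the midpoint of y and its reflection 2 x0 - y, which bounds F y from below.\<close>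

lemma convex_op_bound_transfer:
  fixes F :: "'a::banach_lattice \<Rightarrow> 'a"
  assumes "convex_op F"
    and bound: "\<And>x. x \<in> cball x1 \<epsilon> \<Longrightarrow> norm (F x) \<le> M"
    and "y \<in> cball x0 (\<epsilon> / 2)"
  shows "norm (F y) \<le> 2 * norm (F x0) + norm (F (2 *\<^sub>R x0 - x1)) + M"
proof -
  define p where "p = 2 *\<^sub>R x0 - x1"
  define q where "q = 2 *\<^sub>R x0 - y"
  define b where "b = x1 + 2 *\<^sub>R (y - x0)"
  define b' where "b' = x1 - 2 *\<^sub>R (y - x0)"
  have "b \<in> cball x1 \<epsilon>" "b' \<in> cball x1 \<epsilon>"
    using assms(3) by (simp_all add: b_def b'_def dist_norm norm_minus_commute)
  have mid_bound: "norm (midpoint (F p) (F c)) \<le> (norm (F p) + M) / 2"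
    if "c \<in> cball x1 \<epsilon>" for c
    using bound[OF that] norm_triangle_ineq[of "F p" "F c"]
    by (simp add: midpoint_def divide_simps)
  have "midpoint p b = y" "midpoint p b' = q" "midpoint y q = x0"
    unfolding midpoint_eq_iff p_def q_def b_def b'_def by (simp_all add: scaleR_2 algebra_simps)
  then have upper: "F y \<le> midpoint (F p) (F b)"
    and "F q \<le> midpoint (F p) (F b')"
    and "F x0 \<le> midpoint (F y) (F q)"
    using convex_op_midpoint[OF assms(1)] by metis+
  from \<open>F x0 \<le> midpoint (F y) (F q)\<close> have "F x0 + F x0 \<le> F y + F q"
    by (metis add_mono midpoint_plus_self)
  then have "2 *\<^sub>R F x0 - F q \<le> F y"
    by (simp add: scaleR_2 diff_le_eq)
  with \<open>F q \<le> midpoint (F p) (F b')\<close>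
  have lower: "2 *\<^sub>R F x0 - midpoint (F p) (F b') \<le> F y"
    by (meson diff_left_mono order_trans)
  have "norm (F y) \<le> norm (2 *\<^sub>R F x0 - midpoint (F p) (F b')) + norm (midpoint (F p) (F b))"
    by (rule norm_le_norm_add_norm_if_between[OF lower upper])
  also have "\<dots> \<le> 2 * norm (F x0) + norm (midpoint (F p) (F b')) + norm (midpoint (F p) (F b))"
    using norm_triangle_ineq4[of "2 *\<^sub>R F x0" "midpoint (F p) (F b')"] by simp
  also have "\<dots> \<le> 2 * norm (F x0) + norm (F p) + M"
    using mid_bound[OF \<open>b \<in> cball x1 \<epsilon>\<close>] mid_bound[OF \<open>b' \<in> cball x1 \<epsilon>\<close>] by simp
  finally show ?thesis
    by (simp add: p_def)
qed

lemma real_multiple_plus_remainder: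
  fixes \<delta> t :: real
  assumes "0 < \<delta>" "0 \<le> t" "t \<le> T"
  obtains k :: nat and h where "k \<le> nat \<lfloor>T / \<delta>\<rfloor>" "0 \<le> h" "h < \<delta>" "t = real k * \<delta> + h"
proof
  define k where "k = nat \<lfloor>t / \<delta>\<rfloor>"
  have "real k = of_int \<lfloor>t / \<delta>\<rfloor>"
    using assms by (simp add: k_def)
  then show "0 \<le> t - real k * \<delta>" "t - real k * \<delta> < \<delta>"
    using floor_divide_lower[OF assms(1), of t] floor_divide_upper[OF assms(1), of t]
    by (simp_all add: algebra_simps)
  show "k \<le> nat \<lfloor>T / \<delta>\<rfloor>"
    using assms unfolding k_def by (intro nat_mono floor_mono divide_right_mono) auto
qed simp

lemma semigroup_orbit_bounded:
  fixes S :: "real \<Rightarrow> 'a::real_normed_vector \<Rightarrow> 'a"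
  assumes bounded: "\<And>t. 0 \<le> t \<Longrightarrow> bounded_op (S t)"
    and "S 0 = id"
    and semigroup: "\<And>s t. 0 \<le> s \<Longrightarrow> 0 \<le> t \<Longrightarrow> S (t + s) = S t \<circ> S s"
    and "((\<lambda>t. S t x) \<longlongrightarrow> x) (at_right 0)"
  shows "\<exists>P. \<forall>t\<in>{0..T}. norm (S t x) \<le> P"
proof -
  have "\<forall>\<^sub>F t in at_right 0. dist (S t x) x < 1"
    using assms(4) by (rule tendstoD) simp
  then obtain \<delta> where "\<delta> > 0" and near: "\<And>t. 0 < t \<Longrightarrow> t < \<delta> \<Longrightarrow> dist (S t x) x < 1"
    unfolding eventually_at_right_field by auto
  have short: "norm (S h x) \<le> norm x + 1" if "0 \<le> h" "h < \<delta>" for h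
  proof (cases "h = 0")
    case True
    then show ?thesis
      using \<open>S 0 = id\<close> by simp
  next
    case False
    then have "dist (S h x) x < 1"
      using that by (intro near) auto
    then show ?thesis
      using norm_triangle_ineq2[of "S h x" x] by (simp add: dist_norm)
  qed
  have "\<exists>M. \<forall>y. norm y \<le> norm x + 1 \<longrightarrow> norm (S (real k * \<delta>) y) \<le> M" for k :: nat
    using bounded[of "real k * \<delta>"] \<open>\<delta> > 0\<close> unfolding bounded_op_def
    by (metis add_nonneg_pos norm_ge_zero of_nat_0_le_iff zero_less_one mult_nonneg_nonneg less_imp_le)
  then obtain M where M: "\<And>k y. norm y \<le> norm x + 1 \<Longrightarrow> norm (S (real k * \<delta>) y) \<le> M k"
    by metis
  define N where "N = nat \<lfloor>T / \<delta>\<rfloor>"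
  have "norm (S t x) \<le> (\<Sum>k\<le>N. \<bar>M k\<bar>)" if t: "t \<in> {0..T}" for t
  proof -
    obtain k h where "k \<le> N" "0 \<le> h" "h < \<delta>" "t = real k * \<delta> + h"
      using real_multiple_plus_remainder[OF \<open>\<delta> > 0\<close>, of t T] t unfolding N_def by auto
    have "S t x = S (real k * \<delta>) (S h x)"
      using semigroup[of h "real k * \<delta>"] \<open>0 \<le> h\<close> \<open>\<delta> > 0\<close> \<open>t = real k * \<delta> + h\<close> by simp
    also have "norm \<dots> \<le> M k"
      using M short[OF \<open>0 \<le> h\<close> \<open>h < \<delta>\<close>] by blast
    also have "\<dots> \<le> \<bar>M k\<bar>"
      by simp
    also have "\<dots> \<le> (\<Sum>k\<le>N. \<bar>M k\<bar>)"
      by (rule member_le_sum) (use \<open>k \<le> N\<close> in auto)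
    finally show ?thesis .
  qed
  then show ?thesis
    by blast
qed

lemma convex_C0_semigroup_orbit_bounded:
  assumes "convex_C0_semigroup S"
  obtains P where "\<And>t. t \<in> {0..T} \<Longrightarrow> norm (S t x) \<le> P"
proof -
  have "\<exists>P. \<forall>t\<in>{0..T}. norm (S t x) \<le> P"
    using assms unfolding convex_C0_semigroup_def by (intro semigroup_orbit_bounded) auto
  then show ?thesis
    using that by blast
qed

lemma convex_C0_semigroup_bounded_on_some_cball:
  fixes S :: "real \<Rightarrow> 'a::banach_lattice \<Rightarrow> 'a"
  assumes "convex_C0_semigroup S"
  obtains x1 \<epsilon> M where "0 < \<epsilon>" "\<And>y t. y \<in> cball x1 \<epsilon> \<Longrightarrow> t \<in> {0..T} \<Longrightarrow> norm (S t y) \<le> M"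
proof -
  define C where "C n = (\<Inter>t\<in>{0..T}. {x. norm (S t x) \<le> real n})" for n :: nat
  have "closed (C n)" for n
  proof -
    have "continuous_on UNIV (S t)" if "t \<in> {0..T}" for t
      using assms that unfolding convex_C0_semigroup_def
      by (auto intro: convex_op_bounded_imp_continuous)
    then have "closed {x. norm (S t x) \<le> real n}" if "t \<in> {0..T}" for t
      using that by (intro closed_Collect_le continuous_on_norm continuous_on_const) auto
    then show ?thesis
      unfolding C_def by (simp add: closed_INT)
  qed
  have "\<exists>n. x \<in> C n" for x
  proof -
    obtain P where "\<And>t. t \<in> {0..T} \<Longrightarrow> norm (S t x) \<le> P"
      using convex_C0_semigroup_orbit_bounded[OF assms, where T = T and x = x] by blast
    then have "x \<in> C (nat \<lceil>P\<rceil>)"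
      unfolding C_def using order_trans[OF _ real_nat_ceiling_ge] by blast
    then show ?thesis ..
  qed
  then have "\<Union>(range C) = UNIV"
    by blast
  have "\<exists>n. interior (C n) \<noteq> {}"
  proof (rule ccontr)
    assume "\<nexists>n. interior (C n) \<noteq> {}"
    then have "euclidean interior_of \<Union>(range C) = {}"
      using \<open>\<And>n. closed (C n)\<close>
      by (intro Baire_category_alt) (auto simp: completely_metrizable_space_euclidean simp flip: closed_closedin)
    then show False
      using \<open>\<Union>(range C) = UNIV\<close> by simp
  qed
  then obtain n x1 \<epsilon> where "0 < \<epsilon>" "cball x1 \<epsilon> \<subseteq> C n"
    by (meson ex_in_conv mem_interior_cball)
  show ?thesis
  proof (rule that)
    show "norm (S t y) \<le> real n" if "y \<in> cball x1 \<epsilon>" "t \<in> {0..T}" for y t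
      using \<open>cball x1 \<epsilon> \<subseteq> C n\<close> that unfolding C_def by blast
  qed fact
qed

lemma convex_C0_semigroup_locally_bounded:
  fixes S :: "real \<Rightarrow> 'a::banach_lattice \<Rightarrow> 'a"
  assumes "convex_C0_semigroup S"
  obtains \<rho> M where "0 < \<rho>" "\<And>y t. y \<in> cball x0 \<rho> \<Longrightarrow> t \<in> {0..T} \<Longrightarrow> norm (S t y) \<le> M"
proof -
  obtain x1 \<epsilon> M where "0 < \<epsilon>"
    and ball: "\<And>y t. y \<in> cball x1 \<epsilon> \<Longrightarrow> t \<in> {0..T} \<Longrightarrow> norm (S t y) \<le> M"
    using convex_C0_semigroup_bounded_on_some_cball[OF assms, where T = T] by metis
  obtain P0 where P0: "\<And>t. t \<in> {0..T} \<Longrightarrow> norm (S t x0) \<le> P0"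
    using convex_C0_semigroup_orbit_bounded[OF assms, where T = T and x = x0] by blast
  obtain P1 where P1: "\<And>t. t \<in> {0..T} \<Longrightarrow> norm (S t (2 *\<^sub>R x0 - x1)) \<le> P1"
    using convex_C0_semigroup_orbit_bounded[OF assms, where T = T and x = "2 *\<^sub>R x0 - x1"] by blast
  show ?thesis
  proof (rule that)
    show "0 < \<epsilon> / 2"
      using \<open>0 < \<epsilon>\<close> by simp
    fix y t
    assume "y \<in> cball x0 (\<epsilon> / 2)" "t \<in> {0..T}"
    moreover have "convex_op (S t)"
      using assms \<open>t \<in> {0..T}\<close> unfolding convex_C0_semigroup_def by auto
    ultimately have "norm (S t y) \<le> 2 * norm (S t x0) + norm (S t (2 *\<^sub>R x0 - x1)) + M"
      using ball by (intro convex_op_bound_transfer) auto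
    also have "\<dots> \<le> 2 * P0 + P1 + M"
      using P0 P1 \<open>t \<in> {0..T}\<close> by (intro add_mono) auto
    finally show "norm (S t y) \<le> 2 * P0 + P1 + M" .
  qed
qed

theorem corollary2p4:
  fixes S :: "real \<Rightarrow> 'a::banach_lattice \<Rightarrow> 'a" and T :: real and x0 :: 'a
  assumes "convex_C0_semigroup S" and "T > 0"
  shows "\<exists>L\<ge>0. \<exists>r>0. \<forall>y z. norm (y - x0) \<le> r \<and> norm (z - x0) \<le> r \<longrightarrow>
           (\<forall>t\<in>{0..T}. norm (S t y - S t z) \<le> L * norm (y - z))"
proof -
  obtain \<rho> M where "0 < \<rho>"
    and bound: "\<And>y t. y \<in> cball x0 \<rho> \<Longrightarrow> t \<in> {0..T} \<Longrightarrow> norm (S t y) \<le> M"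
    using convex_C0_semigroup_locally_bounded[OF assms(1), where T = T] by blast
  define L where "L = 4 * M / (\<rho> - \<rho> / 2)"
  have lipschitz: "L-lipschitz_on (cball x0 (\<rho> / 2)) (S t)" if "t \<in> {0..T}" for t
    using assms(1) that \<open>0 < \<rho>\<close> bound unfolding convex_C0_semigroup_def L_def
    by (intro convex_op_lipschitz_on_cball) auto
  have "0 \<le> L"
    using lipschitz[of 0] assms(2) by (simp add: lipschitz_on_nonneg)
  moreover have "norm (S t y - S t z) \<le> L * norm (y - z)"
    if "norm (y - x0) \<le> \<rho> / 2" "norm (z - x0) \<le> \<rho> / 2" "t \<in> {0..T}" for y z t
    using lipschitz[OF that(3)] that(1,2)
    by (simp add: lipschitz_on_def dist_norm norm_minus_commute)
  ultimately show ?thesis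
    using \<open>0 < \<rho>\<close> by (intro exI[of _ L] conjI exI[of _ "\<rho> / 2"]) auto
qed

end
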